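(* Let $u\in(0,1]$, $\beta\in(0,1)$ and $\tau_k\triangleq\lceil(k+1)^u\rceil$ for $k\ge0$. Then for every $k\ge1$, $$\sum_{s=1}^k\beta^{\sum_{p=s}^k\tau_p}\le e\big(\ln(\beta^{-1/(u+1)})\big)^{-\frac{1}{u+1}}\beta^{\frac{(k+1)^{u+1}}{u+1}}+\beta^{\frac{(k+1)^{u+1}-k^{u+1}}{u+1}}\Big(1+\frac{u+1}{k^u\ln(1/\beta)}\Big).$$ *)

theory Defs
  imports Complex_Main
begin

definition tau :: "real \<Rightarrow> nat \<Rightarrow> nat" where
  "tau u k = nat \<lceil>(real k + 1) powr u\<rceil>"

end

theory Submission
  imports Defs
begin

(* Since tau p \<ge> (p+1)^u \<ge> ((p+1)^(u+1) - p^(u+1))/(u+1) by the mean value theorem, the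
   exponent sum over p = s..k is at least ((k+1)^(u+1) - s^(u+1))/(u+1).  With
   c = ln(1/\<beta>)/(u+1) the s-th summand is therefore at most exp(-c (k+1)^(u+1)) exp(c s^(u+1)).
   The summands with s < c^(-1/(u+1)) contribute at most e each.  Beyond that threshold
   exp(c s^(u+1)) is bounded by the increment of G x = exp(c x^(u+1)) / (c x^u) over [s, s+1],
   because G' x = exp(c x^(u+1)) (u + 1 - u / (c x^(u+1))); the increments telescope to G k,
   which together with the summand s = k gives the second term of the bound. *)

lemma powr_add_one_diff_le:
  fixes u x :: real
  assumes "0 \<le> u" "0 < x"
  shows "(x + 1) powr (u + 1) - x powr (u + 1) \<le> (u + 1) * (x + 1) powr u"
proof -
  have "\<exists>z>x. z < x + 1 \<and>
      (x + 1) powr (u + 1) - x powr (u + 1) = (x + 1 - x) * ((u + 1) * z powr (u + 1 - 1))"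
    using assms has_real_derivative_powr[of _ "u + 1"] by (intro MVT2) auto
  then obtain z where z: "x < z" "z < x + 1"
    and mvt: "(x + 1) powr (u + 1) - x powr (u + 1) = (u + 1) * z powr u"
    by auto
  have "z powr u \<le> (x + 1) powr u"
    using z assms by (intro powr_mono2) auto
  with mvt assms show ?thesis by simp
qed

lemma powr_le_tau: "(real k + 1) powr u \<le> real (tau u k)"
  unfolding tau_def by linarith

lemma sum_tau_ge:
  fixes u :: real
  assumes "0 \<le> u" "1 \<le> s" "s \<le> Suc k"
  shows "((real k + 1) powr (u + 1) - real s powr (u + 1)) / (u + 1) \<le> real (\<Sum>p=s..k. tau u p)"
proof -
  have "(real k + 1) powr (u + 1) - real s powr (u + 1)
      = (\<Sum>p=s..k. (real p + 1) powr (u + 1) - real p powr (u + 1))"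
    using sum_Suc_diff'[of s "Suc k" "\<lambda>p. real p powr (u + 1)"] assms
    by (simp add: atLeastLessThanSuc_atLeastAtMost add.commute)
  also have "\<dots> \<le> (\<Sum>p=s..k. (u + 1) * real (tau u p))"
  proof (rule sum_mono)
    fix p assume "p \<in> {s..k}"
    then have "(real p + 1) powr (u + 1) - real p powr (u + 1) \<le> (u + 1) * (real p + 1) powr u"
      using assms by (intro powr_add_one_diff_le) auto
    also have "\<dots> \<le> (u + 1) * real (tau u p)"
      using assms powr_le_tau by (intro mult_left_mono) auto
    finally show "(real p + 1) powr (u + 1) - real p powr (u + 1) \<le> (u + 1) * real (tau u p)" .
  qed
  finally show ?thesis
    using assms by (simp add: sum_distrib_left[symmetric] pos_divide_le_eq mult.commute)
qed

definition exp_powr_majorant :: "real \<Rightarrow> real \<Rightarrow> real \<Rightarrow> real" where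
  "exp_powr_majorant c u x = exp (c * x powr (u + 1)) / (c * x powr u)"

lemma has_real_derivative_exp_powr_majorant:
  fixes c u x :: real
  assumes "0 < c" "0 < x"
  shows "(exp_powr_majorant c u has_real_derivative
           exp (c * x powr (u + 1)) * (u + 1 - u / (c * x powr (u + 1)))) (at x)"
proof -
  define E where "E = exp (c * x powr (u + 1))"
  define P where "P = x powr (u - 1)"
  have "x powr u = P * x" "x powr (u + 1) = P * x * x" "0 < P"
    using assms by (simp_all add: P_def powr_add powr_diff)
  then have "(E * ((u + 1) * x powr u * c) * (c * x powr u) - E * (u * P * c))
      / (c * x powr u * (c * x powr u)) = E * (u + 1 - u / (c * x powr (u + 1)))"
    using assms by (simp add: field_simps)
  moreover have "(exp_powr_majorant c u has_real_derivative
      (E * ((u + 1) * x powr u * c) * (c * x powr u) - E * (u * P * c))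
        / (c * x powr u * (c * x powr u))) (at x)"
    unfolding exp_powr_majorant_def E_def P_def using assms
    by (auto intro!: derivative_eq_intros has_real_derivative_powr[of _ "u + 1", simplified])
  ultimately show ?thesis
    by (simp add: E_def)
qed

lemma exp_powr_le_majorant_diff:
  fixes c u s :: real
  assumes "0 < c" "0 \<le> u" "0 < s" "1 \<le> c * s powr (u + 1)"
  shows "exp (c * s powr (u + 1)) \<le> exp_powr_majorant c u (s + 1) - exp_powr_majorant c u s"
proof -
  have "\<exists>z>s. z < s + 1 \<and> exp_powr_majorant c u (s + 1) - exp_powr_majorant c u s
      = (s + 1 - s) * (exp (c * z powr (u + 1)) * (u + 1 - u / (c * z powr (u + 1))))"
    using assms by (intro MVT2 has_real_derivative_exp_powr_majorant) auto
  then obtain z where z: "s < z"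
    and mvt: "exp_powr_majorant c u (s + 1) - exp_powr_majorant c u s
      = exp (c * z powr (u + 1)) * (u + 1 - u / (c * z powr (u + 1)))"
    by auto
  have sz: "c * s powr (u + 1) \<le> c * z powr (u + 1)"
    using z assms by (intro mult_left_mono powr_mono2) auto
  then have "1 \<le> c * z powr (u + 1)"
    using assms by linarith
  then have "u / (c * z powr (u + 1)) \<le> u"
    using assms by (simp add: pos_divide_le_eq mult_le_cancel_left1)
  have "exp (c * s powr (u + 1)) \<le> exp (c * z powr (u + 1))"
    using sz by simp
  also have "\<dots> \<le> exp (c * z powr (u + 1)) * (u + 1 - u / (c * z powr (u + 1)))"
    using \<open>u / (c * z powr (u + 1)) \<le> u\<close> by simp
  also have "\<dots> = exp_powr_majorant c u (s + 1) - exp_powr_majorant c u s"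
    using mvt by simp
  finally show ?thesis .
qed

lemma sum_exp_powr_le_majorant:
  fixes c u :: real and m n :: nat
  assumes "0 < c" "0 \<le> u" "1 \<le> m" "m \<le> n"
    "\<And>s. m \<le> s \<Longrightarrow> s < n \<Longrightarrow> 1 \<le> c * real s powr (u + 1)"
  shows "(\<Sum>s=m..<n. exp (c * real s powr (u + 1))) \<le> exp_powr_majorant c u (real n)"
proof -
  have "(\<Sum>s=m..<n. exp (c * real s powr (u + 1)))
      \<le> (\<Sum>s=m..<n. exp_powr_majorant c u (real (Suc s)) - exp_powr_majorant c u (real s))"
  proof (rule sum_mono)
    fix s assume "s \<in> {m..<n}"
    then show "exp (c * real s powr (u + 1))
        \<le> exp_powr_majorant c u (real (Suc s)) - exp_powr_majorant c u (real s)"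
      using assms exp_powr_le_majorant_diff[of c u "real s"] by (simp add: add.commute)
  qed
  also have "\<dots> = exp_powr_majorant c u (real n) - exp_powr_majorant c u (real m)"
    using \<open>m \<le> n\<close> by (rule sum_Suc_diff')
  also have "\<dots> \<le> exp_powr_majorant c u (real n)"
    using assms by (simp add: exp_powr_majorant_def)
  finally show ?thesis .
qed

lemma sum_exp_powr_le:
  fixes c u :: real and n :: nat
  assumes "0 < c" "0 \<le> u" "1 \<le> n"
  shows "(\<Sum>s=1..<n. exp (c * real s powr (u + 1)))
    \<le> exp 1 * c powr (-1 / (u + 1)) + exp_powr_majorant c u (real n)"
proof -
  define x0 where "x0 = c powr (-1 / (u + 1))"
  define m where "m = min n (max 1 (nat \<lceil>x0\<rceil>))"
  have x0: "c * x0 powr (u + 1) = 1"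
    unfolding x0_def powr_powr using assms by (simp add: powr_minus)
  have x0_pos: "0 < x0"
    unfolding x0_def using assms by simp
  have "(\<Sum>s=1..<m. exp (c * real s powr (u + 1))) \<le> of_nat (card {1..<m}) * exp 1"
  proof (rule sum_bounded_above)
    fix s assume "s \<in> {1..<m}"
    then have "s < nat \<lceil>x0\<rceil>"
      unfolding m_def by auto
    then have "real s \<le> x0"
      by (metis nat_ceiling_le_eq not_le less_imp_le)
    then have "c * real s powr (u + 1) \<le> c * x0 powr (u + 1)"
      using assms by (intro mult_left_mono powr_mono2) auto
    with x0 show "exp (c * real s powr (u + 1)) \<le> exp 1"
      by simp
  qed
  also have "\<dots> \<le> exp 1 * x0"
  proof -
    have "real (m - 1) \<le> x0"
    proof (cases "m \<le> 1")
      case True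
      with x0_pos show ?thesis
        by simp
    next
      case False
      then have "m \<le> nat \<lceil>x0\<rceil>"
        unfolding m_def by auto
      then show ?thesis
        using ceiling_correct[of x0] False by linarith
    qed
    then show ?thesis
      by simp
  qed
  moreover have "(\<Sum>s=m..<n. exp (c * real s powr (u + 1))) \<le> exp_powr_majorant c u (real n)"
  proof (rule sum_exp_powr_le_majorant)
    fix s assume "m \<le> s" "s < n"
    then have "x0 \<le> real s"
      unfolding m_def by (auto simp: min_le_iff_disj)
    then have "c * x0 powr (u + 1) \<le> c * real s powr (u + 1)"
      using assms x0_pos by (intro mult_left_mono powr_mono2) auto
    with x0 show "1 \<le> c * real s powr (u + 1)"
      by simp
  qed (use assms in \<open>auto simp: m_def\<close>)
  moreover have "(\<Sum>s=1..<n. exp (c * real s powr (u + 1)))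
      = (\<Sum>s=1..<m. exp (c * real s powr (u + 1))) + (\<Sum>s=m..<n. exp (c * real s powr (u + 1)))"
    using assms by (intro sum.atLeastLessThan_concat[symmetric]) (auto simp: m_def)
  ultimately show ?thesis
    unfolding x0_def by linarith
qed

lemma power_sum_tau_le:
  fixes u \<beta> :: real
  assumes "0 \<le> u" "0 < \<beta>" "\<beta> < 1" "1 \<le> s" "s \<le> Suc k"
  shows "\<beta> ^ (\<Sum>p=s..k. tau u p)
    \<le> \<beta> powr (((real k + 1) powr (u + 1) - real s powr (u + 1)) / (u + 1))"
proof -
  have "\<beta> ^ (\<Sum>p=s..k. tau u p) = \<beta> powr real (\<Sum>p=s..k. tau u p)"
    using assms(2) by (rule powr_realpow[symmetric])
  also have "\<dots> \<le> \<beta> powr (((real k + 1) powr (u + 1) - real s powr (u + 1)) / (u + 1))"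
    using assms sum_tau_ge[of u s k] by (intro powr_mono') auto
  finally show ?thesis .
qed

theorem lemma7:
  fixes u \<beta> :: real and k :: nat
  assumes "0 < u" "u \<le> 1" "0 < \<beta>" "\<beta> < 1" "1 \<le> k"
  shows "(\<Sum>s=1..k. \<beta> ^ (\<Sum>p=s..k. tau u p))
    \<le> exp 1 * (ln (\<beta> powr (-1 / (u + 1)))) powr (-1 / (u + 1))
         * \<beta> powr ((real k + 1) powr (u + 1) / (u + 1))
      + \<beta> powr (((real k + 1) powr (u + 1) - real k powr (u + 1)) / (u + 1))
         * (1 + (u + 1) / (real k powr u * ln (1 / \<beta>)))"
proof -
  define c where "c = ln (1 / \<beta>) / (u + 1)"
  define K where "K = (real k + 1) powr (u + 1)"
  define f where "f s = exp (c * real s powr (u + 1))" for s :: nat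
  have c_pos: "0 < c"
    unfolding c_def using assms by simp
  have powr_eq: "\<beta> powr (y / (u + 1)) = exp (- c * y)" for y
    unfolding c_def powr_def using assms by (simp add: ln_div)
  have "(\<Sum>s=1..k. \<beta> ^ (\<Sum>p=s..k. tau u p)) \<le> (\<Sum>s=1..k. exp (- c * K) * f s)"
  proof (rule sum_mono)
    fix s assume "s \<in> {1..k}"
    then show "\<beta> ^ (\<Sum>p=s..k. tau u p) \<le> exp (- c * K) * f s"
      using assms power_sum_tau_le[of u \<beta> s k] powr_eq[of "K - real s powr (u + 1)"]
      by (simp add: K_def f_def algebra_simps flip: exp_add)
  qed
  also have "\<dots> = exp (- c * K) * ((\<Sum>s=1..<k. f s) + f k)"
    using assms by (simp add: sum_distrib_left[symmetric] atLeastLessThanSuc_atLeastAtMost[symmetric])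
  also have "\<dots> \<le> exp (- c * K) * (exp 1 * c powr (-1 / (u + 1)) + exp_powr_majorant c u (real k) + f k)"
    using sum_exp_powr_le[of c u k] c_pos assms by (simp add: f_def)
  finally have "(\<Sum>s=1..k. \<beta> ^ (\<Sum>p=s..k. tau u p))
    \<le> exp (- c * K) * (exp 1 * c powr (-1 / (u + 1)) + exp_powr_majorant c u (real k) + f k)" .
  moreover have "ln (\<beta> powr (-1 / (u + 1))) = c"
    unfolding c_def using assms by (simp add: ln_div)
  moreover have "exp_powr_majorant c u (real k) = f k * ((u + 1) / (real k powr u * ln (1 / \<beta>)))"
    unfolding exp_powr_majorant_def f_def c_def using assms by (simp add: field_simps)
  moreover have "\<beta> powr ((K - real k powr (u + 1)) / (u + 1)) = exp (- c * K) * f k"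
    unfolding powr_eq f_def by (simp add: algebra_simps flip: exp_add)
  ultimately show ?thesis
    using powr_eq[of K] by (simp add: K_def algebra_simps)
qed

end
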